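(* Let $\phi\in\mathrm{Diff}(\mathbb C^2,0)$ with $\phi(\xi)=\Lambda\xi+\mathrm{h.o.t.}$ ($\Lambda=\mathrm{diag}(\lambda,\lambda^{-1})$ or $\Lambda=-\sigma$), such that $\phi^{\circ p}=\exp(\hat{\bm X})$ is tangent to the identity, $\phi$ is reversed by $\sigma$ (i.e. $\sigma\circ\phi\circ\sigma=\phi^{\circ(-1)}$) and has the first integral $h=\xi_1\xi_2$. Let $f:=\frac{\xi_1\circ\phi^{\circ p}-\xi_1}{\xi_1}$ and let $s\in\mathbb Z_{\geq0}$ be maximal such that $h^s$ divides $f$. Then $$\hat{\bm X}=\frac{f\log(1+\bm E.f)}{\bm E.f}\,\bm E\mod h^{-s}f^2\bm E.$$
   Context: $\sigma(\xi)=(\xi_2,\xi_1)$, $\bm E=\xi_1\frac{\partial}{\partial\xi_1}-\xi_2\frac{\partial}{\partial\xi_2}$, $\bm E.f$ is the derivative of $f$ along $\bm E$. $\hat{\bm X}$ is the formal infinitesimal generator of $\phi^{\circ p}$: the unique formal vector field with vanishing linear part whose formal time-1 flow $\exp(\hat{\bm X})$ equals the Taylor series of $\phi^{\circ p}$. $\frac{f\log(1+\bm E.f)}{\bm E.f}$ denotes the formal series $f\sum_{n\geq1}\frac{(-1)^{n-1}}{n}(\bm E.f)^{n-1}$. "mod $h^{-s}f^2\bm E$" means the difference is $g\,h^{-s}f^2\bm E$ for some formal series $g$. *)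

theory Defs
  imports "HOL-Analysis.Analysis"
begin

text \<open>A formal power series in \<xi>1, \<xi>2 is represented by its coefficient function:
  a (i,j) is the coefficient of \<xi>1^i \<xi>2^j.\<close>

type_synonym ps2 = "nat \<times> nat \<Rightarrow> complex"

definition ps_const :: "complex \<Rightarrow> ps2" where
  "ps_const c = (\<lambda>(i,j). if i = 0 \<and> j = 0 then c else 0)"

definition ps_X1 :: ps2 where
  "ps_X1 = (\<lambda>(i,j). if i = 1 \<and> j = 0 then 1 else 0)"

definition ps_X2 :: ps2 where
  "ps_X2 = (\<lambda>(i,j). if i = 0 \<and> j = 1 then 1 else 0)"

definition ps_add :: "ps2 \<Rightarrow> ps2 \<Rightarrow> ps2" where
  "ps_add a b = (\<lambda>k. a k + b k)"

definition ps_sub :: "ps2 \<Rightarrow> ps2 \<Rightarrow> ps2" where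
  "ps_sub a b = (\<lambda>k. a k - b k)"

definition ps_scale :: "complex \<Rightarrow> ps2 \<Rightarrow> ps2" where
  "ps_scale c a = (\<lambda>k. c * a k)"

definition ps_mul :: "ps2 \<Rightarrow> ps2 \<Rightarrow> ps2" where
  "ps_mul a b = (\<lambda>(i,j). \<Sum>i'\<le>i. \<Sum>j'\<le>j. a (i',j') * b (i - i', j - j'))"

fun ps_pow :: "ps2 \<Rightarrow> nat \<Rightarrow> ps2" where
  "ps_pow a 0 = ps_const 1"
| "ps_pow a (Suc n) = ps_mul a (ps_pow a n)"

definition ps_dvd :: "ps2 \<Rightarrow> ps2 \<Rightarrow> bool" where
  "ps_dvd a b \<longleftrightarrow> (\<exists>c. b = ps_mul a c)"

definition ps_d1 :: "ps2 \<Rightarrow> ps2" where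
  "ps_d1 a = (\<lambda>(i,j). of_nat (i+1) * a (i+1, j))"

definition ps_d2 :: "ps2 \<Rightarrow> ps2" where
  "ps_d2 a = (\<lambda>(i,j). of_nat (j+1) * a (i, j+1))"

definition ps_fsum :: "(nat \<Rightarrow> ps2) \<Rightarrow> ps2" where
  "ps_fsum S = (\<lambda>k. \<Sum>n. S n k)"

text \<open>Substitution g(u,v) for series u, v without constant term.\<close>
definition ps_comp :: "ps2 \<Rightarrow> ps2 \<Rightarrow> ps2 \<Rightarrow> ps2" where
  "ps_comp g u v = (\<lambda>k. \<Sum>i. \<Sum>j. g (i,j) * ps_mul (ps_pow u i) (ps_pow v j) k)"

text \<open>Convergence (the series defines a holomorphic germ at 0).\<close>
definition ps_convergent :: "ps2 \<Rightarrow> bool" where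
  "ps_convergent a \<longleftrightarrow>
     (\<exists>r>0. (\<lambda>(i,j). norm (a (i,j)) * r ^ (i + j)) summable_on (UNIV :: (nat \<times> nat) set))"

type_synonym map2 = "ps2 \<times> ps2"

definition map_id :: map2 where
  "map_id = (ps_X1, ps_X2)"

definition map_comp :: "map2 \<Rightarrow> map2 \<Rightarrow> map2" where
  "map_comp F G = (ps_comp (fst F) (fst G) (snd G), ps_comp (snd F) (fst G) (snd G))"

fun map_iter :: "map2 \<Rightarrow> nat \<Rightarrow> map2" where
  "map_iter F 0 = map_id"
| "map_iter F (Suc n) = map_comp F (map_iter F n)"

definition sigma :: map2 where
  "sigma = (ps_X2, ps_X1)"

definition has_linear_part :: "map2 \<Rightarrow> complex \<Rightarrow> complex \<Rightarrow> complex \<Rightarrow> complex \<Rightarrow> bool" where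
  "has_linear_part F a b c d \<longleftrightarrow>
     fst F (0,0) = 0 \<and> snd F (0,0) = 0 \<and>
     fst F (1,0) = a \<and> fst F (0,1) = b \<and> snd F (1,0) = c \<and> snd F (0,1) = d"

definition tangent_to_id :: "map2 \<Rightarrow> bool" where
  "tangent_to_id F \<longleftrightarrow> has_linear_part F 1 0 0 1"

text \<open>A formal vector field X = (a,b) stands for a \<partial>/\<partial>\<xi>1 + b \<partial>/\<partial>\<xi>2.\<close>
type_synonym vf2 = "ps2 \<times> ps2"

definition vf_apply :: "vf2 \<Rightarrow> ps2 \<Rightarrow> ps2" where
  "vf_apply X g = ps_add (ps_mul (fst X) (ps_d1 g)) (ps_mul (snd X) (ps_d2 g))"

fun vf_apply_iter :: "vf2 \<Rightarrow> nat \<Rightarrow> ps2 \<Rightarrow> ps2" where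
  "vf_apply_iter X 0 g = g"
| "vf_apply_iter X (Suc n) g = vf_apply X (vf_apply_iter X n g)"

definition vf_exp :: "vf2 \<Rightarrow> map2" where
  "vf_exp X = (ps_fsum (\<lambda>n. ps_scale (1 / of_nat (fact n)) (vf_apply_iter X n ps_X1)),
               ps_fsum (\<lambda>n. ps_scale (1 / of_nat (fact n)) (vf_apply_iter X n ps_X2)))"

definition vf_order_ge2 :: "vf2 \<Rightarrow> bool" where
  "vf_order_ge2 X \<longleftrightarrow> (\<forall>i j. i + j \<le> 1 \<longrightarrow> fst X (i,j) = 0 \<and> snd X (i,j) = 0)"

definition vf_E :: vf2 where
  "vf_E = (ps_X1, ps_scale (-1) ps_X2)"

definition ps_h :: ps2 where
  "ps_h = ps_mul ps_X1 ps_X2"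

text \<open>f log(1 + E.f) / E.f := f \<Sum>_{n\<ge>1} (-1)^(n-1)/n (E.f)^(n-1).\<close>
definition log_coeff :: "ps2 \<Rightarrow> ps2" where
  "log_coeff f = ps_mul f
     (ps_fsum (\<lambda>n. ps_scale ((-1) ^ n / of_nat (n + 1)) (ps_pow (vf_apply vf_E f) n)))"

definition vf_scale :: "ps2 \<Rightarrow> vf2 \<Rightarrow> vf2" where
  "vf_scale g X = (ps_mul g (fst X), ps_mul g (snd X))"

definition vf_sub :: "vf2 \<Rightarrow> vf2 \<Rightarrow> vf2" where
  "vf_sub X Y = (ps_sub (fst X) (fst Y), ps_sub (snd X) (snd Y))"

end

(*
  The time-1 map exp X is a ring endomorphism of the formal power series ring, and it
  preserves h = xi1 xi2 because every iterate of phi does. Since X has vanishing linear part it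
  raises the order, so exp X h = h forces X.h = 0, i.e. X = a E for some series a.
  For such a field exp(a E) xi1 = xi1 (1 + a (P(w) + a G)) with w = E.a and P(z) = (e^z - 1)/z,
  so f = a u with u a unit. Modulo a, E.f is w P(w), and log(1 + w P(w)) / (w P(w)) = 1 / P(w)
  because 1 + w P(w) = e^w; hence f log(1 + E.f) / E.f = a + a^2 r. Finally a^2 = f^2 / u^2,
  and f^2 = h^s q with q = f (f / h^s).
*)

theory Submission
  imports Defs "HOL-Computational_Algebra.Formal_Power_Series"
begin

unbundle no vec_syntax
notation fps_nth (infixl "$" 75)

section \<open>Bivariate formal power series and their total order\<close>

text \<open>The outer variable is \<open>\<xi>\<^sub>1\<close>: \<open>F $ i $ j\<close> is the coefficient of
  \<open>\<xi>\<^sub>1\<^sup>i \<xi>\<^sub>2\<^sup>j\<close>.\<close>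

type_synonym fps2 = "complex fps fps"

abbreviation fps2_const :: "complex \<Rightarrow> fps2" where
  "fps2_const c \<equiv> fps_const (fps_const c)"

abbreviation fps2_X1 :: fps2 where
  "fps2_X1 \<equiv> fps_X"

abbreviation fps2_X2 :: fps2 where
  "fps2_X2 \<equiv> fps_const fps_X"

definition order_ge :: "nat \<Rightarrow> fps2 \<Rightarrow> bool" where
  "order_ge n F \<longleftrightarrow> (\<forall>i j. i + j < n \<longrightarrow> F $ i $ j = 0)"

lemma fps2_eqI: "(\<And>i j. F $ i $ j = G $ i $ j) \<Longrightarrow> (F :: fps2) = G"
  by (intro fps_ext) auto

lemma fps2_mult_nth:
  "(F * G :: fps2) $ i $ j = (\<Sum>k=0..i. \<Sum>l=0..j. F $ k $ l * G $ (i - k) $ (j - l))"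
  by (simp add: fps_mult_nth fps_sum_nth)

lemma order_ge_0 [simp]: "order_ge 0 F"
  and order_ge_zero [simp]: "order_ge n 0"
  by (simp_all add: order_ge_def)

lemma order_ge_1_X1: "order_ge 1 fps2_X1"
  and order_ge_1_X2: "order_ge 1 fps2_X2"
  by (simp_all add: order_ge_def)

lemma order_ge_mono: "order_ge n F \<Longrightarrow> m \<le> n \<Longrightarrow> order_ge m F"
  by (auto simp: order_ge_def)

lemma order_ge_add: "order_ge n F \<Longrightarrow> order_ge n G \<Longrightarrow> order_ge n (F + G)"
  and order_ge_diff: "order_ge n F \<Longrightarrow> order_ge n G \<Longrightarrow> order_ge n (F - G)"
  and order_ge_uminus: "order_ge n F \<Longrightarrow> order_ge n (- F)"
  by (simp_all add: order_ge_def)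

lemma order_ge_sum: "(\<And>k. k \<in> S \<Longrightarrow> order_ge n (f k)) \<Longrightarrow> order_ge n (sum f S)"
  by (induct S rule: infinite_finite_induct) (auto intro: order_ge_add)

lemma order_ge_sum_diff:
  "(\<And>k. k \<in> S \<Longrightarrow> order_ge n (f k - g k)) \<Longrightarrow> order_ge n (sum f S - sum g S)"
  by (simp only: sum_subtractf[symmetric]) (rule order_ge_sum)

lemma order_ge_mult:
  assumes "order_ge m F" "order_ge n G"
  shows "order_ge (m + n) (F * G)"
  unfolding order_ge_def
proof (intro allI impI)
  fix i j assume ij: "i + j < m + n"
  have "F $ k $ l * G $ (i - k) $ (j - l) = 0" if "k \<le> i" "l \<le> j" for k l
  proof (cases "k + l < m")
    case True
    then show ?thesis using assms(1) by (simp add: order_ge_def)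
  next
    case False
    then have "(i - k) + (j - l) < n" using that ij by auto
    then show ?thesis using assms(2) by (simp add: order_ge_def)
  qed
  then show "(F * G) $ i $ j = 0"
    unfolding fps2_mult_nth by (intro sum.neutral ballI) auto
qed

lemma order_ge_mult_left: "order_ge n G \<Longrightarrow> order_ge n (F * G)"
  using order_ge_mult[of 0 F n G] by simp

lemma order_ge_mult_right: "order_ge n F \<Longrightarrow> order_ge n (F * G)"
  using order_ge_mult[of n F 0 G] by simp

lemma order_ge_power: "order_ge 1 F \<Longrightarrow> order_ge k (F ^ k)"
  by (induct k) (use order_ge_mult[of 1 F] in auto)

lemma order_ge_eqI: "(\<And>N. order_ge N (A - B)) \<Longrightarrow> A = B"
proof (rule fps2_eqI)
  fix i j assume "\<And>N. order_ge N (A - B)"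
  then have "order_ge (i + j + 1) (A - B)" .
  then show "A $ i $ j = B $ i $ j" by (simp add: order_ge_def)
qed

section \<open>Formal sums of sequences whose order tends to infinity\<close>

definition vanishing :: "(nat \<Rightarrow> fps2) \<Rightarrow> bool" where
  "vanishing T \<longleftrightarrow> (\<forall>N. \<exists>M. \<forall>n\<ge>M. order_ge N (T n))"

definition fsum :: "(nat \<Rightarrow> fps2) \<Rightarrow> fps2" where
  "fsum T = Abs_fps (\<lambda>i. Abs_fps (\<lambda>j. \<Sum>n. T n $ i $ j))"

lemma fsum_nth: "fsum T $ i $ j = (\<Sum>n. T n $ i $ j)"
  by (simp add: fsum_def)

lemma vanishingI: "(\<And>n. order_ge (n - c) (T n)) \<Longrightarrow> vanishing T"
  unfolding vanishing_def
proof (intro allI exI[of _ "N + c" for N] impI)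
  fix N n :: nat assume "n \<ge> N + c" and "\<And>n. order_ge (n - c) (T n)"
  then show "order_ge N (T n)" by (meson order_ge_mono le_diff_conv2 le_add2 le_trans)
qed

lemma vanishingI0: "(\<And>n. order_ge n (T n)) \<Longrightarrow> vanishing T"
  using vanishingI[of 0 T] by simp

lemma vanishing_diff: "vanishing S \<Longrightarrow> vanishing T \<Longrightarrow> vanishing (\<lambda>n. S n - T n)"
  unfolding vanishing_def by (metis order_ge_diff nat_le_linear le_trans)

lemma vanishing_mult_left: "vanishing T \<Longrightarrow> vanishing (\<lambda>n. C * T n)"
  unfolding vanishing_def by (metis order_ge_mult_left)

lemma fsum_minus_partial_sum:
  assumes "\<And>n. n \<ge> M \<Longrightarrow> order_ge N (T n)"
  shows "order_ge N (fsum T - sum T {..<M})"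
  unfolding order_ge_def
proof (intro allI impI)
  fix i j assume "i + j < N"
  then have "(\<Sum>n. T n $ i $ j) = (\<Sum>n<M. T n $ i $ j)"
    using assms by (intro suminf_finite) (auto simp: order_ge_def)
  then show "(fsum T - sum T {..<M}) $ i $ j = 0" by (simp add: fsum_nth fps_sum_nth)
qed

lemma fsum_approx:
  "vanishing T \<Longrightarrow> \<exists>M. \<forall>M'\<ge>M. order_ge N (fsum T - sum T {..<M'})"
  unfolding vanishing_def by (meson fsum_minus_partial_sum order.trans)

lemma fsum_eqI:
  assumes "vanishing T" and "\<And>N. \<exists>M. \<forall>M'\<ge>M. order_ge N (Z - sum T {..<M'})"
  shows "fsum T = Z"
proof (rule order_ge_eqI)
  fix N
  obtain M1 where M1: "\<forall>M'\<ge>M1. order_ge N (fsum T - sum T {..<M'})"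
    using fsum_approx[OF assms(1)] by blast
  obtain M2 where M2: "\<forall>M'\<ge>M2. order_ge N (Z - sum T {..<M'})"
    using assms(2) by blast
  define M where "M = max M1 M2"
  have "fsum T - Z = (fsum T - sum T {..<M}) - (Z - sum T {..<M})" by simp
  then show "order_ge N (fsum T - Z)"
    using M1 M2 by (metis M_def order_ge_diff max.cobounded1 max.cobounded2)
qed

lemma summable_coeff:
  assumes "vanishing T"
  shows "summable (\<lambda>n. T n $ i $ j)"
proof -
  obtain M where "\<forall>n\<ge>M. order_ge (i + j + 1) (T n)"
    using assms unfolding vanishing_def by blast
  then show ?thesis
    by (intro summable_finite[of "{..<M}"]) (auto simp: order_ge_def)
qed

lemma fsum_add: "vanishing S \<Longrightarrow> vanishing T \<Longrightarrow> fsum (\<lambda>n. S n + T n) = fsum S + fsum T"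
  by (rule fps2_eqI) (simp add: fsum_nth suminf_add summable_coeff)

lemma fsum_diff: "vanishing S \<Longrightarrow> vanishing T \<Longrightarrow> fsum (\<lambda>n. S n - T n) = fsum S - fsum T"
  by (rule fps2_eqI) (simp add: fsum_nth suminf_diff summable_coeff)

lemma fsum_mult_left: "vanishing T \<Longrightarrow> fsum (\<lambda>n. C * T n) = C * fsum T"
  by (rule fps2_eqI)
    (simp add: fps2_mult_nth fsum_nth suminf_sum summable_sum summable_mult summable_coeff
      suminf_mult)

lemma fsum_Suc:
  assumes "vanishing T"
  shows "fsum T = T 0 + fsum (\<lambda>n. T (Suc n))"
  using suminf_split_head[OF summable_coeff[OF assms]] by (intro fps2_eqI) (simp add: fsum_nth)

lemma fsum_single: "fsum (\<lambda>n. if n = m then A else 0) = A"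
proof (rule fps2_eqI)
  fix i j
  have "(\<lambda>n. (if n = m then A else 0) $ i $ j) = (\<lambda>n. if n = m then A $ i $ j else 0)"
    by auto
  then show "fsum (\<lambda>n. if n = m then A else 0) $ i $ j = A $ i $ j"
    using sums_single[of m "\<lambda>_. A $ i $ j"] by (simp add: fsum_nth sums_iff)
qed

lemma order_ge_fsum: "(\<And>n. order_ge N (T n)) \<Longrightarrow> order_ge N (fsum T)"
  by (simp add: order_ge_def fsum_nth)

lemma order_ge_1_unit:
  assumes "order_ge 1 (u - 1)"
  obtains v where "u * v = 1"
proof -
  define z where "z = 1 - u"
  have "order_ge 1 z" using order_ge_uminus[OF assms] by (simp add: z_def)
  then have z: "vanishing (\<lambda>n. z ^ n)" by (intro vanishingI0 order_ge_power)
  have "fsum (\<lambda>n. z ^ n) = 1 + z * fsum (\<lambda>n. z ^ n)"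
    using fsum_Suc[OF z] by (simp add: fsum_mult_left[OF z])
  then have "u * fsum (\<lambda>n. z ^ n) = 1"
    by (simp add: z_def algebra_simps)
  then show ?thesis by (rule that)
qed

lemma order_ge_partial_sums_mult:
  assumes S: "\<And>n. order_ge n (S n)" and T: "\<And>n. order_ge n (T n)" and "N \<le> M"
  shows "order_ge N (sum S {..<M} * sum T {..<M} - (\<Sum>n<M. \<Sum>k\<le>n. S k * T (n - k)))"
proof -
  define g where "g = (\<lambda>(k, l). S k * T l)"
  define D where "D = {..<M} \<times> {..<M} - {(k, l). k + l < M}"
  have "sum S {..<M} * sum T {..<M} = sum g ({..<M} \<times> {..<M})"
    unfolding sum_product g_def by (rule sum.cartesian_product)
  also have "\<dots> = sum g D + sum g {(k, l). k + l < M}"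
    unfolding D_def by (rule sum.subset_diff) auto
  also have "sum g {(k, l). k + l < M} = (\<Sum>n<M. \<Sum>k\<le>n. S k * T (n - k))"
    unfolding g_def by (rule sum.triangle_reindex)
  finally have "sum S {..<M} * sum T {..<M} - (\<Sum>n<M. \<Sum>k\<le>n. S k * T (n - k)) = sum g D"
    by simp
  moreover have "order_ge N (sum g D)"
  proof (rule order_ge_sum)
    fix x assume "x \<in> D"
    then obtain k l where "x = (k, l)" "N \<le> k + l"
      using assms(3) unfolding D_def by auto
    then show "order_ge N (g x)"
      using order_ge_mult[OF S T, of k l] by (auto simp: g_def intro: order_ge_mono)
  qed
  ultimately show ?thesis by simp
qed

lemma fsum_mult:
  assumes S: "\<And>n. order_ge n (S n)" and T: "\<And>n. order_ge n (T n)"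
  shows "fsum S * fsum T = fsum (\<lambda>n. \<Sum>k\<le>n. S k * T (n - k))"
proof (rule sym, rule fsum_eqI)
  show "vanishing (\<lambda>n. \<Sum>k\<le>n. S k * T (n - k))"
  proof (rule vanishingI0, rule order_ge_sum)
    fix n k :: nat assume "k \<in> {..n}"
    then show "order_ge n (S k * T (n - k))" using order_ge_mult[OF S T, of k "n - k"] by simp
  qed
  fix N
  show "\<exists>M. \<forall>M'\<ge>M. order_ge N (fsum S * fsum T - (\<Sum>n<M'. \<Sum>k\<le>n. S k * T (n - k)))"
  proof (intro exI[of _ N] allI impI)
    fix M assume "N \<le> M"
    define A B where "A = sum S {..<M}" and "B = sum T {..<M}"
    have "order_ge N (fsum S - A)" "order_ge N (fsum T - B)"
      unfolding A_def B_def using S T \<open>N \<le> M\<close>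
      by (meson fsum_minus_partial_sum order_ge_mono order_trans)+
    moreover have "order_ge N (A * B - (\<Sum>n<M. \<Sum>k\<le>n. S k * T (n - k)))"
      unfolding A_def B_def by (rule order_ge_partial_sums_mult[OF S T \<open>N \<le> M\<close>])
    moreover have "fsum S * fsum T - (\<Sum>n<M. \<Sum>k\<le>n. S k * T (n - k)) =
        (fsum S - A) * fsum T + A * (fsum T - B) + (A * B - (\<Sum>n<M. \<Sum>k\<le>n. S k * T (n - k)))"
      by (simp add: algebra_simps)
    ultimately show "order_ge N (fsum S * fsum T - (\<Sum>n<M. \<Sum>k\<le>n. S k * T (n - k)))"
      by (simp only:) (intro order_ge_add order_ge_mult_right order_ge_mult_left)
  qed
qed

section \<open>Substitution of a series without constant term\<close>

definition fps_subst_seq :: "(nat \<Rightarrow> fps2) \<Rightarrow> fps2 \<Rightarrow> fps2" where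
  "fps_subst_seq c w = fsum (\<lambda>n. c n * w ^ n)"

definition fps_subst :: "complex fps \<Rightarrow> fps2 \<Rightarrow> fps2" where
  "fps_subst A w = fps_subst_seq (\<lambda>n. fps2_const (A $ n)) w"

lemma vanishing_power_series: "order_ge 1 w \<Longrightarrow> vanishing (\<lambda>n. c n * w ^ n)"
  by (intro vanishingI0 order_ge_mult_left order_ge_power)

lemma order_ge_fps_subst_seq_minus_partial_sum:
  "order_ge 1 w \<Longrightarrow> N \<le> M \<Longrightarrow> order_ge N (fps_subst_seq c w - (\<Sum>n<M. c n * w ^ n))"
  unfolding fps_subst_seq_def
  by (rule fsum_minus_partial_sum)
    (meson order_trans order_ge_mult_left order_ge_power order_ge_mono)

lemma order_ge_fps_subst_minus_partial_sum:
  "order_ge 1 w \<Longrightarrow> N \<le> M \<Longrightarrow> order_ge N (fps_subst A w - (\<Sum>n<M. fps2_const (A $ n) * w ^ n))"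
  unfolding fps_subst_def by (rule order_ge_fps_subst_seq_minus_partial_sum)

lemma fps_subst_seq_mult:
  assumes "order_ge 1 w"
  shows "fps_subst_seq c w * fps_subst_seq d w = fps_subst_seq (\<lambda>n. \<Sum>k\<le>n. c k * d (n - k)) w"
proof -
  have "fps_subst_seq c w * fps_subst_seq d w =
      fsum (\<lambda>n. \<Sum>k\<le>n. (c k * w ^ k) * (d (n - k) * w ^ (n - k)))"
    unfolding fps_subst_seq_def
    by (rule fsum_mult) (intro order_ge_mult_left order_ge_power assms)+
  also have "(\<lambda>n. \<Sum>k\<le>n. (c k * w ^ k) * (d (n - k) * w ^ (n - k))) =
      (\<lambda>n. (\<Sum>k\<le>n. c k * d (n - k)) * w ^ n)"
  proof (intro ext, unfold sum_distrib_right, rule sum.cong)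
    fix n k :: nat assume "k \<in> {..n}"
    then have "w ^ k * w ^ (n - k) = w ^ n" by (simp flip: power_add)
    then show "(c k * w ^ k) * (d (n - k) * w ^ (n - k)) = c k * d (n - k) * w ^ n"
      by (metis mult.assoc mult.left_commute)
  qed simp
  finally show ?thesis unfolding fps_subst_seq_def .
qed

lemma fps_subst_seq_add:
  "order_ge 1 w \<Longrightarrow> fps_subst_seq (\<lambda>n. c n + d n) w = fps_subst_seq c w + fps_subst_seq d w"
  unfolding fps_subst_seq_def by (simp add: distrib_right fsum_add vanishing_power_series)

lemma fps_subst_seq_single: "fps_subst_seq (\<lambda>n. if n = m then A else 0) w = A * w ^ m"
proof -
  have "(\<lambda>n. (if n = m then A else 0) * w ^ n) = (\<lambda>n. if n = m then A * w ^ m else 0)"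
    by auto
  then show ?thesis unfolding fps_subst_seq_def by (simp add: fsum_single)
qed

lemma order_ge_1_fps_subst_seq:
  assumes "order_ge 1 w" "order_ge 1 (c 0)"
  shows "order_ge 1 (fps_subst_seq c w)"
proof -
  have "order_ge 1 (fps_subst_seq c w - c 0)"
    using order_ge_fps_subst_seq_minus_partial_sum[OF assms(1), of 1 1 c] by simp
  from order_ge_add[OF this assms(2)] show ?thesis by simp
qed

lemma fps2_const_sum: "fps2_const (sum f S) = (\<Sum>k\<in>S. fps2_const (f k))"
  by (induct S rule: infinite_finite_induct) (simp_all flip: fps_const_add)

lemma fps_subst_mult: "order_ge 1 w \<Longrightarrow> fps_subst (A * B) w = fps_subst A w * fps_subst B w"
  unfolding fps_subst_def
  by (simp add: fps_subst_seq_mult fps_mult_nth fps2_const_sum atLeast0AtMost flip: fps_const_mult)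

lemma fps_subst_add: "order_ge 1 w \<Longrightarrow> fps_subst (A + B) w = fps_subst A w + fps_subst B w"
  unfolding fps_subst_def by (simp flip: fps_subst_seq_add fps_const_add)

lemma fps_subst_const: "fps_subst (fps_const c) w = fps2_const c"
proof -
  have "(\<lambda>n. fps2_const (fps_const c $ n)) = (\<lambda>n. if n = 0 then fps2_const c else 0)"
    by auto
  then show ?thesis unfolding fps_subst_def by (simp add: fps_subst_seq_single)
qed

lemma fps_subst_0 [simp]: "fps_subst 0 w = 0"
  and fps_subst_1 [simp]: "fps_subst 1 w = 1"
  using fps_subst_const[of 0 w] fps_subst_const[of 1 w] by simp_all

lemma fps_subst_X [simp]: "fps_subst fps_X w = w"
proof -
  have "(\<lambda>n. fps2_const (fps_X $ n)) = (\<lambda>n. if n = 1 then 1 else 0)"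
    by (auto simp: fps_X_def)
  then show ?thesis unfolding fps_subst_def by (simp add: fps_subst_seq_single)
qed

lemma fps_subst_power: "order_ge 1 w \<Longrightarrow> fps_subst (A ^ k) w = fps_subst A w ^ k"
  by (induct k) (simp_all add: fps_subst_mult)

lemma fps_subst_sum: "order_ge 1 w \<Longrightarrow> fps_subst (sum f S) w = (\<Sum>k\<in>S. fps_subst (f k) w)"
  by (induct S rule: infinite_finite_induct) (simp_all add: fps_subst_add)

lemma order_ge_1_fps_subst: "order_ge 1 w \<Longrightarrow> A $ 0 = 0 \<Longrightarrow> order_ge 1 (fps_subst A w)"
  unfolding fps_subst_def by (rule order_ge_1_fps_subst_seq) auto

lemma order_ge_sum_mult_diff:
  assumes "\<And>i. i \<in> S \<Longrightarrow> order_ge N (X i - Y i)"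
  shows "order_ge N ((\<Sum>i\<in>S. C i * X i) - (\<Sum>i\<in>S. C i * Y i))"
  using assms by (intro order_ge_sum_diff) (simp flip: right_diff_distrib add: order_ge_mult_left)

lemma fps_subst_compose:
  assumes w: "order_ge 1 w" and B0: "B $ 0 = 0"
  shows "fps_subst (A oo B) w = fps_subst A (fps_subst B w)"
proof (rule order_ge_eqI)
  fix N
  define v where "v = fps_subst B w"
  define L where "L = (\<Sum>m<N. fps2_const ((A oo B) $ m) * w ^ m)"
  define R where "R = (\<Sum>i<N. fps2_const (A $ i) * v ^ i)"
  have v: "order_ge 1 v" unfolding v_def by (rule order_ge_1_fps_subst[OF w B0])
  have "order_ge N (fps_subst (A oo B) w - L)"
    unfolding L_def by (rule order_ge_fps_subst_minus_partial_sum[OF w]) simp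
  moreover have "order_ge N (fps_subst A v - R)"
    unfolding R_def by (rule order_ge_fps_subst_minus_partial_sum[OF v]) simp
  moreover have "order_ge N (R - L)"
  proof -
    have "order_ge N (R - (\<Sum>i<N. fps2_const (A $ i) * (\<Sum>m<N. fps2_const ((B ^ i) $ m) * w ^ m)))"
      unfolding R_def v_def fps_subst_power[OF w, symmetric]
      by (intro order_ge_sum_mult_diff order_ge_fps_subst_minus_partial_sum[OF w]) simp
    moreover have "(\<Sum>i<N. fps2_const (A $ i) * (\<Sum>m<N. fps2_const ((B ^ i) $ m) * w ^ m)) = L"
    proof -
      have "(\<Sum>i<N. fps2_const (A $ i) * (\<Sum>m<N. fps2_const ((B ^ i) $ m) * w ^ m)) =
          (\<Sum>m<N. \<Sum>i<N. fps2_const (A $ i * (B ^ i) $ m) * w ^ m)"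
        unfolding sum_distrib_left
        by (subst sum.swap) (simp only: fps_const_mult[symmetric] mult.assoc)
      also have "\<dots> = (\<Sum>m<N. \<Sum>i\<in>{0..m}. fps2_const (A $ i * (B ^ i) $ m) * w ^ m)"
      proof (rule sum.cong[OF refl], rule sum.mono_neutral_right)
        fix m assume "m \<in> {..<N}"
        then show "{0..m} \<subseteq> {..<N}" by auto
        show "\<forall>i\<in>{..<N} - {0..m}. fps2_const (A $ i * (B ^ i) $ m) * w ^ m = 0"
          using startsby_zero_power_prefix[OF B0] by auto
      qed simp
      also have "\<dots> = L"
        unfolding L_def by (simp only: fps_compose_nth fps2_const_sum sum_distrib_right)
      finally show ?thesis .
    qed
    ultimately show ?thesis by simp
  qed
  ultimately have "order_ge N ((fps_subst (A oo B) w - L) - (fps_subst A v - R) - (R - L))"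
    by (meson order_ge_diff)
  then show "order_ge N (fps_subst (A oo B) w - fps_subst A v)"
    by (simp add: algebra_simps)
qed

text \<open>Telescoping \<open>y\<^sub>1\<^sup>n - y\<^sub>2\<^sup>n\<close> termwise shows that \<open>y\<^sub>1 - y\<^sub>2\<close> divides
  \<open>A(y\<^sub>1) - A(y\<^sub>2)\<close>.\<close>

lemma fps_subst_diff_dvd:
  assumes y1: "order_ge 1 y1" and y2: "order_ge 1 y2"
  shows "\<exists>K. fps_subst A y1 - fps_subst A y2 = (y1 - y2) * K"
proof -
  define K where "K = (\<lambda>n. fps2_const (A $ Suc n) * (\<Sum>i<Suc n. y2 ^ (Suc n - Suc i) * y1 ^ i))"
  have "vanishing K"
    unfolding K_def
  proof (rule vanishingI0, rule order_ge_mult_left, rule order_ge_sum)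
    fix n i assume i: "i \<in> {..<Suc n}"
    have "order_ge ((Suc n - Suc i) + i) (y2 ^ (Suc n - Suc i) * y1 ^ i)"
      by (intro order_ge_mult order_ge_power y1 y2)
    then show "order_ge n (y2 ^ (Suc n - Suc i) * y1 ^ i)" using i by (simp add: Suc_diff_le)
  qed
  define D where "D = (\<lambda>n. fps2_const (A $ n) * (y1 ^ n - y2 ^ n))"
  have "vanishing D"
    unfolding D_def right_diff_distrib by (intro vanishing_diff vanishing_power_series y1 y2)
  have "fps_subst A y1 - fps_subst A y2 = fsum D"
    unfolding fps_subst_def fps_subst_seq_def D_def right_diff_distrib
    by (rule fsum_diff[symmetric]) (intro vanishing_power_series y1 y2)+
  also have "\<dots> = fsum (\<lambda>n. D (Suc n))"
    by (subst fsum_Suc[OF \<open>vanishing D\<close>]) (simp add: D_def)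
  also have "\<dots> = fsum (\<lambda>n. (y1 - y2) * K n)"
    unfolding D_def K_def by (simp only: power_diff_sumr2[of y1 "Suc _" y2] mult.left_commute)
  also have "\<dots> = (y1 - y2) * fsum K" by (rule fsum_mult_left[OF \<open>vanishing K\<close>])
  finally show ?thesis by blast
qed

section \<open>The series \<open>(e\<^sup>z - 1) / z\<close> and \<open>log (1 + z) / z\<close>\<close>

definition exp_quot :: "complex fps" where
  "exp_quot = Abs_fps (\<lambda>n. 1 / fact (n + 1))"

definition log_quot :: "complex fps" where
  "log_quot = Abs_fps (\<lambda>n. (-1) ^ n / of_nat (n + 1))"

lemma fps_X_mult_exp_quot: "fps_X * exp_quot = fps_exp 1 - 1"
proof (rule fps_ext)
  fix n show "(fps_X * exp_quot) $ n = (fps_exp 1 - 1) $ n"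
    by (cases n) (auto simp: exp_quot_def algebra_simps)
qed

lemma fps_X_mult_log_quot: "fps_X * log_quot = fps_ln 1"
  by (rule fps_ext) (auto simp: log_quot_def fps_ln_nth)

text \<open>Since \<open>1 + z (e\<^sup>z - 1) / z = e\<^sup>z\<close>, this says \<open>log (e\<^sup>z) / z = 1\<close>.\<close>

lemma exp_quot_mult_log_quot_compose: "exp_quot * (log_quot oo (fps_X * exp_quot)) = 1"
proof -
  define B where "B = fps_exp (1 :: complex) - 1"
  have B0: "B $ 0 = 0" by (simp add: B_def)
  have "fps_ln (1 :: complex) oo B = fps_X"
    unfolding B_def fps_ln_fps_exp_inv[of 1, OF one_neq_zero]
    by (rule fps_inv_fps_exp_compose(1)) simp
  then have "B * (log_quot oo B) = fps_X"
    by (simp only: fps_X_mult_log_quot[symmetric] fps_compose_mult_distrib[OF B0]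
        fps_X_fps_compose_startby0[OF B0])
  then have "fps_X * (exp_quot * (log_quot oo B)) = fps_X * 1"
    by (simp only: B_def fps_X_mult_exp_quot mult.assoc[symmetric] mult_1_right)
  then show ?thesis by (simp add: B_def fps_X_mult_exp_quot)
qed

lemma order_ge_1_fps_subst_exp_quot_minus_1:
  "order_ge 1 w \<Longrightarrow> order_ge 1 (fps_subst exp_quot w - 1)"
  using order_ge_fps_subst_minus_partial_sum[of w 1 1 exp_quot] by (simp add: exp_quot_def)

section \<open>Composition of bivariate series\<close>

definition comp2 :: "fps2 \<Rightarrow> fps2 \<Rightarrow> fps2 \<Rightarrow> fps2" where
  "comp2 g u v = Abs_fps (\<lambda>i. Abs_fps (\<lambda>j. \<Sum>I. \<Sum>J. g $ I $ J * (u ^ I * v ^ J) $ i $ j))"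

lemma order_ge_comp2_minus_partial_sum:
  assumes u: "order_ge 1 u" and v: "order_ge 1 v"
  shows "order_ge N (comp2 g u v - (\<Sum>I<N. \<Sum>J<N. fps2_const (g $ I $ J) * (u ^ I * v ^ J)))"
  unfolding order_ge_def
proof (intro allI impI)
  fix i j assume ij: "i + j < N"
  have z: "(u ^ I * v ^ J) $ i $ j = 0" if "N \<le> I \<or> N \<le> J" for I J
  proof -
    have "order_ge (I + J) (u ^ I * v ^ J)" by (intro order_ge_mult order_ge_power u v)
    then show ?thesis using that ij by (auto simp: order_ge_def)
  qed
  have "(\<Sum>J. g $ I $ J * (u ^ I * v ^ J) $ i $ j) = (\<Sum>J<N. g $ I $ J * (u ^ I * v ^ J) $ i $ j)"
    for I by (rule suminf_finite) (auto simp: z)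
  moreover have "(\<Sum>I. \<Sum>J<N. g $ I $ J * (u ^ I * v ^ J) $ i $ j) =
      (\<Sum>I<N. \<Sum>J<N. g $ I $ J * (u ^ I * v ^ J) $ i $ j)"
    by (rule suminf_finite) (auto simp: z)
  ultimately show
    "(comp2 g u v - (\<Sum>I<N. \<Sum>J<N. fps2_const (g $ I $ J) * (u ^ I * v ^ J))) $ i $ j = 0"
    by (simp add: comp2_def fps_sum_nth)
qed

lemma comp2_eq_fps_subst_seq:
  assumes u: "order_ge 1 u" and v: "order_ge 1 v"
  shows "comp2 g u v = fps_subst_seq (\<lambda>I. fps_subst (g $ I) v) u"
proof (rule order_ge_eqI)
  fix N
  define S0 where "S0 = (\<Sum>I<N. \<Sum>J<N. fps2_const (g $ I $ J) * (u ^ I * v ^ J))"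
  define S1 where "S1 = (\<Sum>I<N. fps_subst (g $ I) v * u ^ I)"
  have "order_ge N (comp2 g u v - S0)"
    unfolding S0_def by (rule order_ge_comp2_minus_partial_sum[OF u v])
  moreover have "order_ge N (fps_subst_seq (\<lambda>I. fps_subst (g $ I) v) u - S1)"
    unfolding S1_def by (rule order_ge_fps_subst_seq_minus_partial_sum[OF u]) simp
  moreover have "order_ge N (S1 - S0)"
  proof -
    have "S0 = (\<Sum>I<N. (\<Sum>J<N. fps2_const (g $ I $ J) * v ^ J) * u ^ I)"
      unfolding S0_def sum_distrib_right by (simp only: ac_simps)
    then show ?thesis
      unfolding S1_def
      by (simp only: mult.commute[of _ "u ^ _"])
        (intro order_ge_sum_mult_diff order_ge_fps_subst_minus_partial_sum[OF v] order_refl)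
  qed
  ultimately have
    "order_ge N ((comp2 g u v - S0) - (fps_subst_seq (\<lambda>I. fps_subst (g $ I) v) u - S1) - (S1 - S0))"
    by (meson order_ge_diff)
  then show "order_ge N (comp2 g u v - fps_subst_seq (\<lambda>I. fps_subst (g $ I) v) u)"
    by (simp add: algebra_simps)
qed

lemma comp2_mult:
  assumes u: "order_ge 1 u" and v: "order_ge 1 v"
  shows "comp2 (g * k) u v = comp2 g u v * comp2 k u v"
proof -
  have "fps_subst ((g * k) $ I) v = (\<Sum>i\<le>I. fps_subst (g $ i) v * fps_subst (k $ (I - i)) v)" for I
    by (simp only: fps_mult_nth fps_subst_sum[OF v] fps_subst_mult[OF v] atLeast0AtMost)
  then show ?thesis
    unfolding comp2_eq_fps_subst_seq[OF u v] fps_subst_seq_mult[OF u] by simp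
qed

lemma comp2_X1:
  assumes "order_ge 1 u" "order_ge 1 v"
  shows "comp2 fps2_X1 u v = u"
proof -
  have "(\<lambda>I. fps_subst (fps2_X1 $ I) v) = (\<lambda>I. if I = 1 then 1 else 0)"
    by (auto simp: fps_X_def)
  then show ?thesis by (simp add: comp2_eq_fps_subst_seq[OF assms] fps_subst_seq_single)
qed

lemma comp2_X2:
  assumes "order_ge 1 u" "order_ge 1 v"
  shows "comp2 fps2_X2 u v = v"
proof -
  have "(\<lambda>I. fps_subst (fps2_X2 $ I) v) = (\<lambda>I. if I = 0 then v else 0)"
    by auto
  then show ?thesis by (simp add: comp2_eq_fps_subst_seq[OF assms] fps_subst_seq_single)
qed

lemma order_ge_1_comp2:
  assumes "order_ge 1 u" "order_ge 1 v" "g $ 0 $ 0 = 0"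
  shows "order_ge 1 (comp2 g u v)"
  using order_ge_comp2_minus_partial_sum[OF assms(1,2), of 1 g] assms(3) by simp

lemma comp2_X1_mult_X2:
  "order_ge 1 u \<Longrightarrow> order_ge 1 v \<Longrightarrow> comp2 (fps2_X1 * fps2_X2) u v = u * v"
  by (simp add: comp2_mult comp2_X1 comp2_X2)

section \<open>Derivations and their exponentials\<close>

definition fps2_deriv2 :: "fps2 \<Rightarrow> fps2" where
  "fps2_deriv2 F = Abs_fps (\<lambda>i. fps_deriv (F $ i))"

lemma fps2_deriv2_nth [simp]: "fps2_deriv2 F $ i $ j = of_nat (j + 1) * F $ i $ (j + 1)"
  by (simp add: fps2_deriv2_def)

lemma fps2_deriv2_add [simp]: "fps2_deriv2 (F + G) = fps2_deriv2 F + fps2_deriv2 G"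
  by (rule fps2_eqI) (simp add: algebra_simps)

lemma fps2_deriv2_mult: "fps2_deriv2 (F * G) = fps2_deriv2 F * G + F * fps2_deriv2 G"
  unfolding fps2_deriv2_def by (intro fps_ext) (simp add: fps_mult_nth fps_deriv_sum sum.distrib)

lemma fps2_deriv2_const [simp]: "fps2_deriv2 (fps2_const c) = 0"
  and fps2_deriv2_X1 [simp]: "fps2_deriv2 fps2_X1 = 0"
  and fps2_deriv2_X2 [simp]: "fps2_deriv2 fps2_X2 = 1"
  by (rule fps2_eqI; simp)+

definition vderiv :: "fps2 \<Rightarrow> fps2 \<Rightarrow> fps2 \<Rightarrow> fps2" where
  "vderiv P Q F = P * fps_deriv F + Q * fps2_deriv2 F"

lemma vderiv_const [simp]: "vderiv P Q (fps2_const c) = 0"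
  by (simp add: vderiv_def)

lemma vderiv_add: "vderiv P Q (F + G) = vderiv P Q F + vderiv P Q G"
  by (simp add: vderiv_def algebra_simps)

lemma vderiv_sum: "vderiv P Q (sum f S) = (\<Sum>k\<in>S. vderiv P Q (f k))"
  using vderiv_const[of P Q 0]
  by (induct S rule: infinite_finite_induct) (simp_all add: vderiv_add)

lemma vderiv_mult: "vderiv P Q (F * G) = vderiv P Q F * G + F * vderiv P Q G"
  by (simp add: vderiv_def fps2_deriv2_mult algebra_simps)

lemma vderiv_of_nat_mult: "vderiv P Q (of_nat m * F) = of_nat m * vderiv P Q F"
  by (simp add: vderiv_mult flip: fps_of_nat)

lemma order_ge_fps_deriv: "order_ge (Suc m) F \<Longrightarrow> order_ge m (fps_deriv F)"
  unfolding order_ge_def fps_deriv_nth fps_of_nat[symmetric] fps_mult_left_const_nth by auto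

lemma order_ge_fps2_deriv2: "order_ge (Suc m) F \<Longrightarrow> order_ge m (fps2_deriv2 F)"
  by (simp add: order_ge_def)

lemma order_ge_vderiv:
  assumes P: "order_ge 2 P" and Q: "order_ge 2 Q" and F: "order_ge m F"
  shows "order_ge (Suc m) (vderiv P Q F)"
proof (cases m)
  case 0
  have "order_ge 2 (vderiv P Q F)"
    unfolding vderiv_def by (intro order_ge_add order_ge_mult_right P Q)
  then show ?thesis using 0 by (auto intro: order_ge_mono)
next
  case (Suc k)
  have "order_ge (2 + k) (vderiv P Q F)" unfolding vderiv_def
    using F Suc
    by (intro order_ge_add order_ge_mult P Q order_ge_fps_deriv order_ge_fps2_deriv2) auto
  then show ?thesis using Suc by (auto intro: order_ge_mono)
qed

lemma order_ge_vderiv_power: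
  "order_ge 2 P \<Longrightarrow> order_ge 2 Q \<Longrightarrow> order_ge m F \<Longrightarrow> order_ge (n + m) ((vderiv P Q ^^ n) F)"
  by (induct n) (auto intro: order_ge_vderiv)

lemma binomial_convolution_Suc:
  fixes A B :: "nat \<Rightarrow> 'a::comm_ring_1"
  shows "(\<Sum>k\<le>n. of_nat (n choose k) * (A (Suc k) * B (n - k) + A k * B (Suc (n - k)))) =
         (\<Sum>k\<le>Suc n. of_nat (Suc n choose k) * (A k * B (Suc n - k)))"
proof -
  have "(\<Sum>k\<le>n. of_nat (n choose k) * (A k * B (Suc (n - k)))) =
        (\<Sum>k\<le>Suc n. of_nat (n choose k) * (A k * B (Suc n - k)))"
    by (simp add: sum.atMost_Suc binomial_eq_0 Suc_diff_le)
  also have "\<dots> = A 0 * B (Suc n) + (\<Sum>k\<le>n. of_nat (n choose Suc k) * (A (Suc k) * B (n - k)))"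
    by (subst sum.atMost_Suc_shift) simp
  finally show ?thesis
    by (subst sum.atMost_Suc_shift) (simp add: ring_distribs sum.distrib)
qed

lemma vderiv_power_mult:
  "(vderiv P Q ^^ n) (F * G) =
     (\<Sum>k\<le>n. of_nat (n choose k) * ((vderiv P Q ^^ k) F * (vderiv P Q ^^ (n - k)) G))"
proof (induct n)
  case (Suc n)
  have "(vderiv P Q ^^ Suc n) (F * G) = (\<Sum>k\<le>n. of_nat (n choose k) *
      ((vderiv P Q ^^ Suc k) F * (vderiv P Q ^^ (n - k)) G +
       (vderiv P Q ^^ k) F * (vderiv P Q ^^ Suc (n - k)) G))"
    by (simp only: funpow.simps comp_def Suc vderiv_sum vderiv_of_nat_mult)
      (simp only: vderiv_mult)
  also have "\<dots> = (\<Sum>k\<le>Suc n. of_nat (Suc n choose k) *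
      ((vderiv P Q ^^ k) F * (vderiv P Q ^^ (Suc n - k)) G))"
    by (rule binomial_convolution_Suc)
  finally show ?case .
qed simp

definition exp_vderiv :: "fps2 \<Rightarrow> fps2 \<Rightarrow> fps2 \<Rightarrow> fps2" where
  "exp_vderiv P Q F = fsum (\<lambda>n. fps2_const (1 / fact n) * (vderiv P Q ^^ n) F)"

lemma exp_vderiv_mult:
  assumes P: "order_ge 2 P" and Q: "order_ge 2 Q"
  shows "exp_vderiv P Q (F * G) = exp_vderiv P Q F * exp_vderiv P Q G"
proof -
  have "fps2_const (1 / fact n) * (vderiv P Q ^^ n) (F * G) =
     (\<Sum>k\<le>n. (fps2_const (1 / fact k) * (vderiv P Q ^^ k) F) *
       (fps2_const (1 / fact (n - k)) * (vderiv P Q ^^ (n - k)) G))" for n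
    unfolding vderiv_power_mult sum_distrib_left
  proof (rule sum.cong[OF refl])
    fix k assume "k \<in> {..n}"
    then have "fps2_const (1 / fact n) * of_nat (n choose k) =
        fps2_const (1 / fact k) * fps2_const (1 / fact (n - k))"
      by (simp add: binomial_fact flip: fps_of_nat)
    then show "fps2_const (1 / fact n) * (of_nat (n choose k) *
        ((vderiv P Q ^^ k) F * (vderiv P Q ^^ (n - k)) G)) =
        (fps2_const (1 / fact k) * (vderiv P Q ^^ k) F) *
        (fps2_const (1 / fact (n - k)) * (vderiv P Q ^^ (n - k)) G)"
      by (simp only: mult.assoc[symmetric]) (simp only: ac_simps)
  qed
  moreover have "order_ge n (fps2_const c * (vderiv P Q ^^ n) H)" for c n H
    using order_ge_vderiv_power[OF P Q order_ge_0, of n H] by (simp add: order_ge_mult_left)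
  ultimately show ?thesis
    unfolding exp_vderiv_def by (subst fsum_mult) simp_all
qed

lemma vanishing_exp_terms:
  "order_ge 2 P \<Longrightarrow> order_ge 2 Q \<Longrightarrow> vanishing (\<lambda>n. fps2_const (c n) * (vderiv P Q ^^ n) F)"
  using order_ge_vderiv_power[of P Q 0 F] by (intro vanishingI0 order_ge_mult_left) simp

text \<open>Writing \<open>Z = V F\<close>, the fixed-point equation says \<open>Z = - \<Sum>\<^sub>n V\<^sup>n\<^sup>+\<^sup>1 Z / (n+2)!\<close>;
  since \<open>V\<close> raises the order, this forces \<open>Z\<close> to vanish to every order.\<close>

lemma vderiv_eq_0_if_exp_vderiv_fixed:
  assumes P: "order_ge 2 P" and Q: "order_ge 2 Q" and fixed: "exp_vderiv P Q F = F"
  shows "vderiv P Q F = 0"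
proof (rule order_ge_eqI)
  define Z where "Z = vderiv P Q F"
  define R where "R = fsum (\<lambda>n. fps2_const (1 / fact (n + 2)) * (vderiv P Q ^^ (n + 1)) Z)"
  have "F + fsum (\<lambda>n. fps2_const (1 / fact (n + 1)) * (vderiv P Q ^^ n) Z) = F"
    using fixed fsum_Suc[OF vanishing_exp_terms[OF P Q, of "\<lambda>n. 1 / fact n" F]]
    by (simp add: exp_vderiv_def Z_def funpow_Suc_right del: funpow.simps)
  then have "Z + R = 0"
    using fsum_Suc[OF vanishing_exp_terms[OF P Q, of "\<lambda>n. 1 / fact (n + 1)" Z]]
    by (simp add: R_def)
  then have Z: "Z = - R" by (simp add: eq_neg_iff_add_eq_0)
  have "order_ge m Z" for m
  proof (induct m)
    case (Suc m)
    have "order_ge (Suc m) ((vderiv P Q ^^ (n + 1)) Z)" for n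
      using order_ge_vderiv_power[OF P Q Suc, of "n + 1"] by (rule order_ge_mono) simp
    then have "order_ge (Suc m) R"
      unfolding R_def by (intro order_ge_fsum order_ge_mult_left)
    then show ?case unfolding Z by (rule order_ge_uminus)
  qed simp
  then show "order_ge N (vderiv P Q F - 0)" for N by (simp add: Z_def)
qed

definition euler :: "fps2 \<Rightarrow> fps2" where
  "euler F = fps2_X1 * fps_deriv F - fps2_X2 * fps2_deriv2 F"

lemma euler_nth: "euler F $ i $ j = (of_nat i - of_nat j) * F $ i $ j"
  by (cases i; cases j) (simp_all add: euler_def algebra_simps)

lemma euler_mult: "euler (F * G) = euler F * G + F * euler G"
  by (simp add: euler_def fps2_deriv2_mult algebra_simps)

lemma euler_X1 [simp]: "euler fps2_X1 = fps2_X1"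
  and euler_X2 [simp]: "euler fps2_X2 = - fps2_X2"
  by (simp_all add: euler_def)

lemma order_ge_euler: "order_ge n F \<Longrightarrow> order_ge n (euler F)"
  by (simp add: order_ge_def euler_nth)

lemma vderiv_eq_mult_euler: "vderiv (fps2_X1 * a) (- (fps2_X2 * a)) = (\<lambda>F. a * euler F)"
  by (rule ext) (simp add: vderiv_def euler_def algebra_simps)

lemma order_ge_2_mult_euler:
  assumes "order_ge 1 a"
  shows "order_ge 2 (fps2_X1 * a)" "order_ge 2 (- (fps2_X2 * a))"
  using order_ge_mult[OF order_ge_1_X1 assms] order_ge_mult[OF order_ge_1_X2 assms]
  by (simp_all only: one_add_one order_ge_uminus)

text \<open>A generator with vanishing linear part whose time-1 map preserves \<open>h = \<xi>\<^sub>1 \<xi>\<^sub>2\<close>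
  annihilates \<open>h\<close>, and the fields annihilating \<open>h\<close> are the multiples of \<open>E\<close>.\<close>

lemma generator_eq_mult_euler:
  assumes P: "order_ge 2 P" and Q: "order_ge 2 Q"
    and h: "exp_vderiv P Q fps2_X1 * exp_vderiv P Q fps2_X2 = fps2_X1 * fps2_X2"
  obtains a where "order_ge 1 a" "P = fps2_X1 * a" "Q = - (fps2_X2 * a)"
proof -
  have "vderiv P Q (fps2_X1 * fps2_X2) = 0"
    using h by (intro vderiv_eq_0_if_exp_vderiv_fixed P Q) (simp add: exp_vderiv_mult[OF P Q])
  then have PQ: "P * fps2_X2 + Q * fps2_X1 = 0"
    by (simp add: vderiv_def fps2_deriv2_mult)
  moreover have "(P * fps2_X2 + Q * fps2_X1) $ 0 = P $ 0 * fps_X" by simp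
  ultimately have P0: "P $ 0 = 0" by simp
  define a where "a = fps_shift 1 P"
  have Pa: "P = fps2_X1 * a"
  proof (rule fps_ext)
    fix n show "P $ n = (fps2_X1 * a) $ n" by (cases n) (simp_all add: a_def P0)
  qed
  have "fps2_X1 * (a * fps2_X2 + Q) = 0" using PQ unfolding Pa by (simp add: algebra_simps)
  then have "a * fps2_X2 + Q = 0" by simp
  then have "Q = - (fps2_X2 * a)" by (simp add: eq_neg_iff_add_eq_0 algebra_simps)
  moreover have "order_ge 1 a"
    using P by (simp add: order_ge_def a_def)
  ultimately show ?thesis using that Pa by blast
qed

fun flow_coeff :: "fps2 \<Rightarrow> nat \<Rightarrow> fps2" where
  "flow_coeff a 0 = 1"
| "flow_coeff a (Suc n) = a * flow_coeff a n + euler (a * flow_coeff a n)"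

fun flow_coeff_rem :: "fps2 \<Rightarrow> nat \<Rightarrow> fps2" where
  "flow_coeff_rem a 0 = 0"
| "flow_coeff_rem a (Suc n) =
     euler a * flow_coeff_rem a n + flow_coeff a n + euler (flow_coeff a n)"

lemma mult_euler_power_X1:
  "((\<lambda>F. a * euler F) ^^ Suc n) fps2_X1 = a * flow_coeff a n * fps2_X1"
proof (induct n)
  case (Suc n)
  have "((\<lambda>F. a * euler F) ^^ Suc (Suc n)) fps2_X1 = a * euler (a * flow_coeff a n * fps2_X1)"
    by (simp only: funpow.simps(2)[where n = "Suc n"] comp_apply Suc)
  then show ?case by (simp add: euler_mult algebra_simps)
qed simp

lemma flow_coeff_eq: "flow_coeff a n = euler a ^ n + a * flow_coeff_rem a n"
proof (induct n)
  case (Suc n)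
  have "flow_coeff a (Suc n) =
      a * flow_coeff a n + euler a * flow_coeff a n + a * euler (flow_coeff a n)"
    by (simp add: euler_mult)
  also have "euler a * flow_coeff a n = euler a ^ Suc n + a * (euler a * flow_coeff_rem a n)"
    by (simp add: Suc algebra_simps)
  finally show ?case by (simp add: algebra_simps del: flow_coeff.simps)
qed simp

lemma order_ge_flow_coeff_rem:
  assumes a: "order_ge 1 a"
  shows "order_ge (n - 1) (flow_coeff_rem a n)"
proof (induct n)
  case (Suc n)
  have "order_ge (1 + (n - 1)) (a * flow_coeff_rem a n)"
    by (intro order_ge_mult a Suc)
  then have "order_ge n (flow_coeff a n)"
    unfolding flow_coeff_eq
    by (intro order_ge_add order_ge_power order_ge_euler a) (auto intro: order_ge_mono)
  moreover have "order_ge n (euler a * flow_coeff_rem a n)"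
    using order_ge_mult[OF order_ge_euler[OF a] Suc] by (rule order_ge_mono) simp
  ultimately show ?case by (simp add: order_ge_add order_ge_euler)
qed simp

lemma exp_mult_euler_X1:
  assumes a: "order_ge 1 a"
  obtains G where
    "exp_vderiv (fps2_X1 * a) (- (fps2_X2 * a)) fps2_X1 =
       fps2_X1 * (1 + a * (fps_subst exp_quot (euler a) + a * G))"
proof -
  define c where "c = (\<lambda>n. fps2_const (1 / fact (Suc n)))"
  define G where "G = fsum (\<lambda>n. c n * flow_coeff_rem a n)"
  have rem: "vanishing (\<lambda>n. c n * flow_coeff_rem a n)"
    by (intro vanishingI[of 1] order_ge_mult_left order_ge_flow_coeff_rem a)
  have pow: "vanishing (\<lambda>n. c n * euler a ^ n)"
    by (intro vanishing_power_series order_ge_euler a)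
  have "vanishing (\<lambda>n. fps2_const (1 / fact n) * ((\<lambda>F. a * euler F) ^^ n) fps2_X1)"
    using vanishing_exp_terms[OF order_ge_2_mult_euler[OF a]] unfolding vderiv_eq_mult_euler .
  then have "exp_vderiv (fps2_X1 * a) (- (fps2_X2 * a)) fps2_X1 =
      fps2_X1 + fsum (\<lambda>n. fps2_X1 * a * (c n * flow_coeff a n))"
    unfolding exp_vderiv_def vderiv_eq_mult_euler
    by (subst fsum_Suc) (simp_all only: mult_euler_power_X1 c_def ac_simps, simp)
  also have "fsum (\<lambda>n. fps2_X1 * a * (c n * flow_coeff a n)) =
      fps2_X1 * a * (fsum (\<lambda>n. c n * euler a ^ n) + a * G)"
    unfolding flow_coeff_eq distrib_left G_def
    by (simp add: fsum_add fsum_mult_left rem pow vanishing_mult_left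
        mult.left_commute[of "c _" a])
  also have "fsum (\<lambda>n. c n * euler a ^ n) = fps_subst exp_quot (euler a)"
    by (simp add: fps_subst_def fps_subst_seq_def exp_quot_def c_def)
  finally show ?thesis by (intro that[of G]) (simp add: algebra_simps)
qed

section \<open>The logarithm formula\<close>

text \<open>With \<open>w = E a\<close> and \<open>f = a (P(w) + a G)\<close>, where \<open>P(z) = (e\<^sup>z - 1)/z\<close>, we have
  \<open>E f \<equiv> w P(w)\<close> modulo \<open>a\<close>, and \<open>log(1 + w P(w)) / (w P(w)) = 1 / P(w)\<close>.\<close>

lemma mult_fps_subst_log_quot_euler:
  assumes a: "order_ge 1 a"
  obtains r where
    "a * (fps_subst exp_quot (euler a) + a * G) *
       fps_subst log_quot (euler (a * (fps_subst exp_quot (euler a) + a * G))) = a + a\<^sup>2 * r"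
proof -
  define w where "w = euler a"
  define Pw where "Pw = fps_subst exp_quot w"
  define u where "u = Pw + a * G"
  define S where "S = fps_subst log_quot (w * Pw)"
  have w: "order_ge 1 w" unfolding w_def by (rule order_ge_euler[OF a])
  have "order_ge 1 (euler (a * u))" by (intro order_ge_euler order_ge_mult_right a)
  moreover have "order_ge 1 (w * Pw)" by (rule order_ge_mult_right[OF w])
  ultimately obtain K
    where K: "fps_subst log_quot (euler (a * u)) - S = (euler (a * u) - w * Pw) * K"
    unfolding S_def using fps_subst_diff_dvd by blast
  have "euler (a * u) - w * Pw = w * (u - Pw) + a * euler u"
    by (simp add: euler_mult w_def algebra_simps)
  also have "u - Pw = a * G" by (simp add: u_def)
  finally have "euler (a * u) - w * Pw = a * (w * G + euler u)" by (simp add: algebra_simps)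
  then have log: "fps_subst log_quot (euler (a * u)) = S + a * ((w * G + euler u) * K)"
    using K by (simp add: algebra_simps)
  have "(fps_X * exp_quot) $ 0 = 0" by simp
  then have "S = fps_subst (log_quot oo (fps_X * exp_quot)) w"
    unfolding S_def Pw_def by (simp add: fps_subst_compose[OF w] fps_subst_mult[OF w])
  then have "Pw * S = 1"
    by (simp add: Pw_def exp_quot_mult_log_quot_compose flip: fps_subst_mult[OF w])
  then have uS: "u * S = 1 + a * (G * S)" by (simp add: u_def algebra_simps)
  have "a * u * fps_subst log_quot (euler (a * u)) =
      a * (u * S) + a\<^sup>2 * (u * ((w * G + euler u) * K))"
    unfolding log by (simp add: algebra_simps power2_eq_square)
  also have "\<dots> = a + a\<^sup>2 * (G * S + u * ((w * G + euler u) * K))"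
    unfolding uS by (simp add: algebra_simps power2_eq_square)
  finally show ?thesis unfolding u_def Pw_def w_def by (rule that)
qed

lemma generator_log_formula:
  assumes P: "order_ge 2 P" and Q: "order_ge 2 Q"
    and h: "exp_vderiv P Q fps2_X1 * exp_vderiv P Q fps2_X2 = fps2_X1 * fps2_X2"
    and F: "fps2_X1 * F = exp_vderiv P Q fps2_X1 - fps2_X1"
  obtains a k where "P = fps2_X1 * a" "Q = - (fps2_X2 * a)"
    and "a = F * fps_subst log_quot (euler F) + F\<^sup>2 * k"
proof -
  obtain a where a: "order_ge 1 a" and P_eq: "P = fps2_X1 * a" and Q_eq: "Q = - (fps2_X2 * a)"
    using generator_eq_mult_euler[OF P Q h] by blast
  obtain G
    where "exp_vderiv P Q fps2_X1 = fps2_X1 * (1 + a * (fps_subst exp_quot (euler a) + a * G))"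
    using exp_mult_euler_X1[OF a] unfolding P_eq Q_eq by blast
  define u where "u = fps_subst exp_quot (euler a) + a * G"
  have "fps2_X1 * F = fps2_X1 * (a * u)"
    using F \<open>exp_vderiv P Q fps2_X1 = _\<close> by (simp add: u_def algebra_simps)
  then have F_eq: "F = a * u" by simp
  obtain r where r: "F * fps_subst log_quot (euler F) = a + a\<^sup>2 * r"
    using mult_fps_subst_log_quot_euler[OF a] unfolding F_eq u_def by blast
  have "u - 1 = (fps_subst exp_quot (euler a) - 1) + a * G" by (simp add: u_def)
  moreover have "order_ge 1 ((fps_subst exp_quot (euler a) - 1) + a * G)"
    by (intro order_ge_add order_ge_mult_right a order_ge_1_fps_subst_exp_quot_minus_1
        order_ge_euler)
  ultimately have "order_ge 1 (u - 1)" by (simp only:)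
  then obtain v where v: "u * v = 1" by (rule order_ge_1_unit)
  have "a = F * v" by (simp add: F_eq mult.assoc v)
  then have "a = F * fps_subst log_quot (euler F) + F\<^sup>2 * (- (v\<^sup>2 * r))"
    using r by (simp add: algebra_simps power2_eq_square)
  then show ?thesis using that P_eq Q_eq by blast
qed

section \<open>Transfer from coefficient functions\<close>

lemma fps_const_uminus_mult: "fps_const (- c) * G = - (fps_const c * G)"
  for G :: "'a::comm_ring_1 fps"
  by (simp flip: fps_const_neg)

definition to_fps2 :: "ps2 \<Rightarrow> fps2" where
  "to_fps2 a = Abs_fps (\<lambda>i. Abs_fps (\<lambda>j. a (i, j)))"

lemma to_fps2_nth [simp]: "to_fps2 a $ i $ j = a (i, j)"
  by (simp add: to_fps2_def)

lemma to_fps2_inject: "to_fps2 a = to_fps2 b \<longleftrightarrow> a = b"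
proof
  assume "to_fps2 a = to_fps2 b"
  then have "to_fps2 a $ fst k $ snd k = to_fps2 b $ fst k $ snd k" for k by simp
  then show "a = b" by (simp add: fun_eq_iff)
qed simp

lemma to_fps2_coeffs: "to_fps2 (\<lambda>(i, j). F $ i $ j) = F"
  by (rule fps2_eqI) simp

lemma to_fps2_add: "to_fps2 (ps_add a b) = to_fps2 a + to_fps2 b"
  by (rule fps2_eqI) (simp add: ps_add_def)

lemma to_fps2_sub: "to_fps2 (ps_sub a b) = to_fps2 a - to_fps2 b"
  by (rule fps2_eqI) (simp add: ps_sub_def)

lemma to_fps2_mul: "to_fps2 (ps_mul a b) = to_fps2 a * to_fps2 b"
  by (rule fps2_eqI) (simp add: ps_mul_def fps2_mult_nth atLeast0AtMost)

lemma to_fps2_const: "to_fps2 (ps_const c) = fps2_const c"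
  by (rule fps2_eqI) (simp add: ps_const_def)

lemma to_fps2_scale: "to_fps2 (ps_scale c a) = fps2_const c * to_fps2 a"
  by (rule fps2_eqI) (simp add: ps_scale_def)

lemma to_fps2_X1: "to_fps2 ps_X1 = fps2_X1"
  by (rule fps2_eqI) (simp add: ps_X1_def)

lemma to_fps2_X2: "to_fps2 ps_X2 = fps2_X2"
  by (rule fps2_eqI) (auto simp add: ps_X2_def)

lemma to_fps2_d1: "to_fps2 (ps_d1 a) = fps_deriv (to_fps2 a)"
  by (rule fps2_eqI) (simp add: ps_d1_def flip: fps_of_nat del: of_nat_Suc)

lemma to_fps2_d2: "to_fps2 (ps_d2 a) = fps2_deriv2 (to_fps2 a)"
  by (rule fps2_eqI) (simp add: ps_d2_def)

lemma to_fps2_fsum: "to_fps2 (ps_fsum S) = fsum (\<lambda>n. to_fps2 (S n))"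
  by (rule fps2_eqI) (simp add: ps_fsum_def fsum_nth)

lemma to_fps2_pow: "to_fps2 (ps_pow a n) = to_fps2 a ^ n"
  by (induct n) (simp_all add: to_fps2_mul to_fps2_const)

lemma to_fps2_h: "to_fps2 ps_h = fps2_X1 * fps2_X2"
  by (simp add: ps_h_def to_fps2_mul to_fps2_X1 to_fps2_X2)

lemma ps_dvd_iff: "ps_dvd a b \<longleftrightarrow> (\<exists>c. to_fps2 b = to_fps2 a * c)"
  unfolding ps_dvd_def by (metis to_fps2_inject[THEN iffD1] to_fps2_mul to_fps2_coeffs)

lemma to_fps2_comp: "to_fps2 (ps_comp g u v) = comp2 (to_fps2 g) (to_fps2 u) (to_fps2 v)"
proof (rule fps2_eqI)
  fix i j
  have "ps_mul (ps_pow u I) (ps_pow v J) (i, j) = (to_fps2 u ^ I * to_fps2 v ^ J) $ i $ j" for I J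
    by (metis to_fps2_mul to_fps2_nth to_fps2_pow)
  then show "to_fps2 (ps_comp g u v) $ i $ j = comp2 (to_fps2 g) (to_fps2 u) (to_fps2 v) $ i $ j"
    by (simp add: ps_comp_def comp2_def)
qed

lemma to_fps2_vf_apply:
  "to_fps2 (vf_apply X g) = vderiv (to_fps2 (fst X)) (to_fps2 (snd X)) (to_fps2 g)"
  by (simp add: vf_apply_def vderiv_def to_fps2_add to_fps2_mul to_fps2_d1 to_fps2_d2)

lemma to_fps2_vf_exp:
  "to_fps2 (fst (vf_exp X)) = exp_vderiv (to_fps2 (fst X)) (to_fps2 (snd X)) fps2_X1"
  "to_fps2 (snd (vf_exp X)) = exp_vderiv (to_fps2 (fst X)) (to_fps2 (snd X)) fps2_X2"
proof -
  have "to_fps2 (vf_apply_iter X n g) =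
      (vderiv (to_fps2 (fst X)) (to_fps2 (snd X)) ^^ n) (to_fps2 g)" for n g
    by (induct n) (simp_all add: to_fps2_vf_apply)
  then show "to_fps2 (fst (vf_exp X)) = exp_vderiv (to_fps2 (fst X)) (to_fps2 (snd X)) fps2_X1"
    "to_fps2 (snd (vf_exp X)) = exp_vderiv (to_fps2 (fst X)) (to_fps2 (snd X)) fps2_X2"
    by (simp_all add: vf_exp_def to_fps2_fsum to_fps2_scale to_fps2_X1 to_fps2_X2 exp_vderiv_def)
qed

lemma to_fps2_vf_E: "to_fps2 (fst vf_E) = fps2_X1" "to_fps2 (snd vf_E) = - fps2_X2"
  by (simp_all add: vf_E_def to_fps2_X1 to_fps2_X2 to_fps2_scale)

lemma to_fps2_log_coeff:
  "to_fps2 (log_coeff f) = to_fps2 f * fps_subst log_quot (euler (to_fps2 f))"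
proof -
  have "to_fps2 (vf_apply vf_E g) = euler (to_fps2 g)" for g
    by (simp add: to_fps2_vf_apply to_fps2_vf_E vderiv_def euler_def fps_const_uminus_mult)
  then show ?thesis
    by (simp add: log_coeff_def to_fps2_mul to_fps2_fsum to_fps2_scale to_fps2_pow fps_subst_def
        fps_subst_seq_def log_quot_def)
qed

lemma map_iter_preserves_h:
  assumes "fst phi (0, 0) = 0" "snd phi (0, 0) = 0"
    and "ps_comp ps_h (fst phi) (snd phi) = ps_h"
  shows "to_fps2 (fst (map_iter phi n)) * to_fps2 (snd (map_iter phi n)) = fps2_X1 * fps2_X2"
proof -
  define u v where "u = to_fps2 (fst phi)" and "v = to_fps2 (snd phi)"
  have uv: "order_ge 1 u" "order_ge 1 v" "u $ 0 $ 0 = 0" "v $ 0 $ 0 = 0"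
    using assms(1,2) by (simp_all add: u_def v_def order_ge_def)
  have "u * v = fps2_X1 * fps2_X2"
    using arg_cong[OF assms(3), of to_fps2] uv
    by (simp add: u_def v_def to_fps2_comp to_fps2_h comp2_X1_mult_X2)
  have "order_ge 1 (to_fps2 (fst (map_iter phi n))) \<and> order_ge 1 (to_fps2 (snd (map_iter phi n)))
      \<and> to_fps2 (fst (map_iter phi n)) * to_fps2 (snd (map_iter phi n)) = fps2_X1 * fps2_X2"
  proof (induct n)
    case 0
    show ?case
      using order_ge_1_X1 order_ge_1_X2 by (simp add: map_id_def to_fps2_X1 to_fps2_X2)
  next
    case (Suc n)
    define u' v' where "u' = to_fps2 (fst (map_iter phi n))"
      and "v' = to_fps2 (snd (map_iter phi n))"
    have "order_ge 1 u'" "order_ge 1 v'" "u' * v' = fps2_X1 * fps2_X2"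
      using Suc by (simp_all add: u'_def v'_def)
    moreover have "to_fps2 (fst (map_iter phi (Suc n))) = comp2 u u' v'"
      "to_fps2 (snd (map_iter phi (Suc n))) = comp2 v u' v'"
      by (simp_all add: map_comp_def to_fps2_comp u_def v_def u'_def v'_def)
    ultimately show ?case
      using uv \<open>u * v = _\<close> order_ge_1_comp2[of u' v' u] order_ge_1_comp2[of u' v' v]
        comp2_mult[of u' v' u v] comp2_X1_mult_X2[of u' v']
      by simp
  qed
  then show ?thesis by blast
qed

lemma to_fps2_vf_order_ge2:
  "vf_order_ge2 X \<Longrightarrow> order_ge 2 (to_fps2 (fst X)) \<and> order_ge 2 (to_fps2 (snd X))"
  by (auto simp: order_ge_def vf_order_ge2_def)

lemma vf_sub_scale_E_eq_iff:
  "vf_sub X (vf_scale c vf_E) = vf_scale d vf_E \<longleftrightarrow>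
     to_fps2 (fst X) = fps2_X1 * (to_fps2 c + to_fps2 d) \<and>
     to_fps2 (snd X) = - fps2_X2 * (to_fps2 c + to_fps2 d)"
  by (simp add: vf_sub_def vf_scale_def prod_eq_iff to_fps2_sub to_fps2_mul to_fps2_vf_E
      eq_diff_eq flip: to_fps2_inject)
    (simp add: algebra_simps)

theorem mainTheorem17:
  fixes phi :: map2 and p :: nat and lam :: complex
    and X :: vf2 and f :: ps2 and s :: nat
  assumes conv: "ps_convergent (fst phi) \<and> ps_convergent (snd phi)"
    and lin: "(lam \<noteq> 0 \<and> has_linear_part phi lam 0 0 (1 / lam)) \<or> has_linear_part phi 0 (-1) (-1) 0"
    and p: "p \<ge> 1"
    and tang: "tangent_to_id (map_iter phi p)"
    and gen: "vf_order_ge2 X \<and> vf_exp X = map_iter phi p"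
    and rev: "map_comp (map_comp (map_comp sigma phi) sigma) phi = map_id
              \<and> map_comp phi (map_comp (map_comp sigma phi) sigma) = map_id"
    and integral: "ps_comp ps_h (fst phi) (snd phi) = ps_h"
    and f_def: "ps_mul ps_X1 f = ps_sub (fst (map_iter phi p)) ps_X1"
    and s_max: "ps_dvd (ps_pow ps_h s) f \<and> \<not> ps_dvd (ps_pow ps_h (Suc s)) f"
  shows "\<exists>g q. ps_pow f 2 = ps_mul (ps_pow ps_h s) q \<and>
               vf_sub X (vf_scale (log_coeff f) vf_E) = vf_scale (ps_mul g q) vf_E"
proof -
  define P Q F where "P = to_fps2 (fst X)" and "Q = to_fps2 (snd X)" and "F = to_fps2 f"
  have exp: "exp_vderiv P Q fps2_X1 = to_fps2 (fst (map_iter phi p))"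
    "exp_vderiv P Q fps2_X2 = to_fps2 (snd (map_iter phi p))"
    using gen by (simp_all add: P_def Q_def flip: to_fps2_vf_exp)
  have "fst phi (0, 0) = 0" "snd phi (0, 0) = 0"
    using lin by (auto simp: has_linear_part_def)
  note h = map_iter_preserves_h[OF this integral, of p, folded exp]
  have "fps2_X1 * F = exp_vderiv P Q fps2_X1 - fps2_X1"
    using arg_cong[OF f_def, of to_fps2] by (simp add: exp F_def to_fps2_mul to_fps2_sub to_fps2_X1)
  then obtain a k where PQ: "P = fps2_X1 * a" "Q = - (fps2_X2 * a)"
    and a: "a = F * fps_subst log_quot (euler F) + F\<^sup>2 * k"
    using generator_log_formula h to_fps2_vf_order_ge2 gen unfolding P_def Q_def by metis
  obtain F0 where F0: "F = (fps2_X1 * fps2_X2) ^ s * F0"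
    using s_max by (auto simp: ps_dvd_iff to_fps2_pow to_fps2_h F_def)
  define g q where "g = (fps2_X1 * fps2_X2) ^ s * k" and "q = F * F0"
  have "F\<^sup>2 = (fps2_X1 * fps2_X2) ^ s * q"
    unfolding q_def power2_eq_square by (subst (1) F0) (simp add: ac_simps)
  moreover from this have "a = to_fps2 (log_coeff f) + g * q"
    by (simp add: a g_def to_fps2_log_coeff F_def ac_simps)
  ultimately have "ps_pow f 2 = ps_mul (ps_pow ps_h s) (\<lambda>(i, j). q $ i $ j) \<and>
      vf_sub X (vf_scale (log_coeff f) vf_E) =
        vf_scale (ps_mul (\<lambda>(i, j). g $ i $ j) (\<lambda>(i, j). q $ i $ j)) vf_E"
    using PQ unfolding vf_sub_scale_E_eq_iff
    by (simp add: P_def Q_def F_def to_fps2_mul to_fps2_pow to_fps2_h to_fps2_coeffs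
        fps_const_uminus_mult flip: to_fps2_inject)
  then show ?thesis by blast
qed

end
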